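(* Let $S$ be a set of patterns and $f_n$ the number of rooted labeled forests on $[n]$ avoiding $S$. Then $\lim_{n\to\infty}\frac{f_n^{1/n}}{n}=0$ if and only if $S$ contains the pattern $12\cdots k$ and the pattern $\ell(\ell-1)\cdots 1$ for some positive integers $k$ and $\ell$.
   Context: A rooted labeled forest on $[n]$ is an unordered forest on $n$ vertices, each component with a distinguished root, with distinct labels from $[n]$. A pattern of length $k$ is a permutation of $[k]$; an instance of it is a sequence of vertices $v_1,\dots,v_k$ with $v_i$ a strict ancestor of $v_{i+1}$ whose labels are in the same relative order as the pattern; a forest avoids $S$ if it contains no instance of any pattern in $S$. *)

theory Defs
  imports Complex_Main
begin

text \<open>A rooted labeled forest on [n] = {1..n} is encoded by its parent map
  par :: nat => nat, where par v = 0 means that v is a root (0 is not a vertex),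
  and par is 0 outside [n] (so the encoding is unique). Acyclicity: iterating
  par from any vertex eventually reaches 0.\<close>
definition is_forest :: "nat \<Rightarrow> (nat \<Rightarrow> nat) \<Rightarrow> bool" where
  "is_forest n par \<longleftrightarrow>
     (\<forall>v. v \<notin> {1..n} \<longrightarrow> par v = 0) \<and>
     (\<forall>v\<in>{1..n}. par v \<le> n) \<and>
     (\<forall>v\<in>{1..n}. \<exists>m. (par ^^ m) v = 0)"

definition strict_anc :: "(nat \<Rightarrow> nat) \<Rightarrow> nat \<Rightarrow> nat \<Rightarrow> bool" where
  "strict_anc par u w \<longleftrightarrow> u \<noteq> 0 \<and> (\<exists>m\<ge>1. (par ^^ m) w = u)"

definition is_pattern :: "nat list \<Rightarrow> bool" where
  "is_pattern p \<longleftrightarrow> length p \<ge> 1 \<and> distinct p \<and> set p = {1..length p}"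

definition is_instance :: "nat \<Rightarrow> (nat \<Rightarrow> nat) \<Rightarrow> nat list \<Rightarrow> nat list \<Rightarrow> bool" where
  "is_instance n par p vs \<longleftrightarrow>
     length vs = length p \<and> set vs \<subseteq> {1..n} \<and>
     (\<forall>i. Suc i < length vs \<longrightarrow> strict_anc par (vs ! i) (vs ! Suc i)) \<and>
     (\<forall>i<length p. \<forall>j<length p. p ! i < p ! j \<longleftrightarrow> vs ! i < vs ! j)"

definition avoids :: "nat \<Rightarrow> (nat \<Rightarrow> nat) \<Rightarrow> nat list set \<Rightarrow> bool" where
  "avoids n par S \<longleftrightarrow> (\<forall>p\<in>S. \<not> (\<exists>vs. is_instance n par p vs))"

definition num_avoiding :: "nat list set \<Rightarrow> nat \<Rightarrow> nat" where
  "num_avoiding S n = card {par. is_forest n par \<and> avoids n par S}"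

end

theory Submission
  imports Defs "HOL-Library.FuncSet" "HOL-Library.Sublist"
begin

(* If S contains no increasing pattern, every forest in which each parent has a smaller label
   than its child avoids S, because all of its chains increase. There are n! such forests (the
   parent of v is any of 0, ..., v - 1, where 0 stands for "v is a root"), and root n (n!) / n
   tends to 1/e. Decreasing patterns are handled symmetrically.

   Conversely, if S contains 12...k and l...1, then by Erdos-Szekeres no path from a vertex
   to its root has 2^(k+l) vertices, so the depth is bounded by some h. Such a forest is
   determined by its depth function, together with a parent for each vertex among the vertices
   one level up. If a_j vertices have depth j, with a_0 = 1 for the virtual root, this gives at
   most h^n * max (prod a_(j-1)^(a_j)) forests, the maximum being taken over a_1 + ... + a_h = n.
   That product is o(n)^n: if it exceeded (delta n)^n, then each factor (a_(j-1)/n)^(a_j) would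
   exceed delta^n, so a_j >= c n forces a_(j-1) > delta^(1/c) n. Starting from a largest level,
   where a_j >= n/h, and going down to a_0 = 1 gives a contradiction once n is large. *)

definition Pi_zero :: "'a set \<Rightarrow> ('a \<Rightarrow> 'b set) \<Rightarrow> ('a \<Rightarrow> 'b::zero) set" where
  "Pi_zero A B = {f. (\<forall>x\<in>A. f x \<in> B x) \<and> (\<forall>x. x \<notin> A \<longrightarrow> f x = 0)}"

lemma bij_betw_restrict_Pi_zero: "bij_betw (\<lambda>f. restrict f A) (Pi_zero A B) (PiE A B)"
  by (rule bij_betw_byWitness[where f' = "\<lambda>g x. if x \<in> A then g x else 0"])
    (auto simp: Pi_zero_def fun_eq_iff PiE_def extensional_def)

lemma card_Pi_zero: "finite A \<Longrightarrow> card (Pi_zero A B) = (\<Prod>x\<in>A. card (B x))"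
  using bij_betw_same_card[OF bij_betw_restrict_Pi_zero] card_PiE by metis

lemma finite_Pi_zero: "finite A \<Longrightarrow> (\<And>x. x \<in> A \<Longrightarrow> finite (B x)) \<Longrightarrow> finite (Pi_zero A B)"
  using bij_betw_finite[OF bij_betw_restrict_Pi_zero] finite_PiE by metis

lemma prod_eq_prod_power_card_fibres:
  fixes f :: "'b \<Rightarrow> 'c::comm_monoid_mult"
  assumes "finite A" "finite J" "g ` A \<subseteq> J"
  shows "(\<Prod>x\<in>A. f (g x)) = (\<Prod>j\<in>J. f j ^ card {x\<in>A. g x = j})"
proof -
  have "(\<Prod>x\<in>A. f (g x)) = (\<Prod>j\<in>J. \<Prod>x\<in>{x\<in>A. g x = j}. f (g x))"
    using prod.group[OF assms, where h = "\<lambda>x. f (g x)"] by simp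
  also have "\<dots> = (\<Prod>j\<in>J. f j ^ card {x\<in>A. g x = j})"
    by (intro prod.cong refl) simp
  finally show ?thesis .
qed

lemma sum_card_fibres:
  assumes "finite A" "finite J" "g ` A \<subseteq> J"
  shows "(\<Sum>j\<in>J. card {x\<in>A. g x = j}) = card A"
  using sum.group[OF assms, where h = "\<lambda>_. 1::nat"] by simp

lemma prod_le_factor:
  fixes f :: "'a \<Rightarrow> 'b::linordered_semidom"
  assumes "finite A" "j \<in> A" "\<And>i. i \<in> A \<Longrightarrow> 0 \<le> f i \<and> f i \<le> 1"
  shows "prod f A \<le> f j"
proof -
  have "prod f A = f j * prod f (A - {j})" using assms(1,2) by (rule prod.remove)
  also have "\<dots> \<le> f j * 1" using assms by (intro mult_left_mono prod_le_1) auto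
  finally show ?thesis by simp
qed

lemma prod_power_eq_normalised:
  assumes "(\<Sum>j\<in>J. a j) = n" "0 < n"
  shows "(\<Prod>j\<in>J. real (b j) ^ a j) = real n ^ n * (\<Prod>j\<in>J. (b j / n) ^ a j)"
proof -
  have "(\<Prod>j\<in>J. real (b j) ^ a j) = (\<Prod>j\<in>J. real n ^ a j * (b j / n) ^ a j)"
    using assms(2) by (intro prod.cong refl) (simp add: power_mult_distrib[symmetric])
  also have "\<dots> = real n ^ (\<Sum>j\<in>J. a j) * (\<Prod>j\<in>J. (b j / n) ^ a j)"
    by (simp add: prod.distrib power_sum)
  finally show ?thesis by (simp only: assms(1))
qed

lemma root_fact_ge: "n > 0 \<Longrightarrow> real n / exp 1 \<le> root n (fact n)"
proof -
  assume "n > 0"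
  have "real n ^ n / fact n \<le> exp (real n)"
    using sum_le_suminf[of "\<lambda>m. real n ^ m /\<^sub>R fact m" "{n}"] exp_converges[of "real n"]
    by (auto simp: sums_iff divide_inverse mult.commute)
  then have "(real n / exp 1) ^ n \<le> fact n"
    by (simp add: power_divide divide_le_eq exp_of_nat_mult[symmetric] mult.commute)
  then show ?thesis
    using \<open>n > 0\<close> real_root_le_iff[of n "(real n / exp 1) ^ n" "fact n"] by (simp add: real_root_pos2)
qed

lemma root_div_not_tendsto_zero:
  assumes "\<And>n. fact n \<le> f n"
  shows "\<not> (\<lambda>n. root n (real (f n)) / n) \<longlonglongrightarrow> 0"
proof
  assume lim: "(\<lambda>n. root n (real (f n)) / n) \<longlonglongrightarrow> 0"
  have "1 / exp 1 \<le> root n (real (f n)) / n" if "1 \<le> n" for n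
  proof -
    have "real n / exp 1 \<le> root n (fact n)" using that by (intro root_fact_ge) simp
    also have "\<dots> \<le> root n (real (f n))"
    proof -
      have "(fact n :: real) \<le> real (f n)" using assms[of n] by (metis of_nat_fact of_nat_le_iff)
      then show ?thesis using that by simp
    qed
    finally show ?thesis using that by (simp add: field_simps)
  qed
  then have "1 / exp 1 \<le> (0::real)" using LIMSEQ_le_const[OF lim] by blast
  then show False by simp
qed

lemma root_div_tendsto_zero:
  assumes "\<And>\<epsilon>::real. 0 < \<epsilon> \<Longrightarrow> \<forall>\<^sub>F n in sequentially. real (f n) \<le> (\<epsilon> * n) ^ n"
  shows "(\<lambda>n. root n (real (f n)) / n) \<longlonglongrightarrow> 0"
proof (rule order_tendstoI)
  fix a :: real
  assume "a < 0"
  have "0 \<le> root n (real (f n)) / n" for n by (intro divide_nonneg_nonneg real_root_ge_zero) simp_all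
  then show "\<forall>\<^sub>F n in sequentially. a < root n (real (f n)) / n"
    using \<open>a < 0\<close> by (intro always_eventually allI) (rule less_le_trans)
next
  fix a :: real
  assume "0 < a"
  then have "0 < a / 2" by simp
  have "\<forall>\<^sub>F n in sequentially. real (f n) \<le> (a / 2 * n) ^ n \<and> 0 < n"
    using assms[OF \<open>0 < a / 2\<close>] eventually_gt_at_top[of 0] by (rule eventually_conj)
  then show "\<forall>\<^sub>F n in sequentially. root n (real (f n)) / n < a"
  proof (rule eventually_mono, elim conjE)
    fix n :: nat
    assume "real (f n) \<le> (a / 2 * n) ^ n" "0 < n"
    then have "root n (real (f n)) \<le> root n ((a / 2 * n) ^ n)" by simp
    also have "\<dots> = a / 2 * n" using \<open>0 < a\<close> \<open>0 < n\<close> by (intro real_root_pos2) auto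
    finally have "root n (real (f n)) / n \<le> a / 2" using \<open>0 < n\<close> by (simp add: field_simps)
    then show "root n (real (f n)) / n < a" using \<open>0 < a\<close> by linarith
  qed
qed

section \<open>The Erdos-Szekeres theorem\<close>

lemma set_subseq_subset: "subseq xs ys \<Longrightarrow> set xs \<subseteq> set ys"
  by (induction rule: list_emb.induct) auto

lemma sorted_wrt_subseq: "subseq xs ys \<Longrightarrow> sorted_wrt P ys \<Longrightarrow> sorted_wrt P xs"
  by (induction rule: list_emb.induct) (auto dest: set_subseq_subset)

lemma subseq_of_subseq_filter:
  assumes "subseq ys (filter P xs)"
  shows "subseq ys (x # xs)" "subseq (x # ys) (x # xs)" "\<forall>y\<in>set ys. P y"
  using subseq_order.order_trans[OF assms subseq_filter_left] set_subseq_subset[OF assms] by auto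

lemma distinct_if_sorted_wrt_irrefl: "sorted_wrt R xs \<Longrightarrow> (\<And>x. \<not> R x x) \<Longrightarrow> distinct xs"
  by (induction xs) auto

lemma erdos_szekeres:
  fixes xs :: "'a::linorder list"
  assumes "2 ^ (k + l) \<le> length xs" "distinct xs"
  shows "\<exists>ys. subseq ys xs \<and>
           (length ys = k \<and> sorted_wrt (<) ys \<or> length ys = l \<and> sorted_wrt (>) ys)"
  using assms
proof (induction "k + l" arbitrary: k l xs rule: less_induct)
  case less
  show ?case
  proof (cases "k = 0 \<or> l = 0")
    case True
    then show ?thesis by (intro exI[of _ "[]"]) auto
  next
    case False
    then obtain k' l' where kl: "k = Suc k'" "l = Suc l'" by (meson not0_implies_Suc)
    then obtain x rest where xs: "xs = x # rest"
      using less.prems(1) by (cases xs) auto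
    define above where "above = filter (\<lambda>y. x < y) rest"
    define below where "below = filter (\<lambda>y. y < x) rest"
    have x_rest: "x \<notin> set rest" "distinct rest" using less.prems(2) xs by auto
    then have "filter (\<lambda>y. \<not> x < y) rest = below"
      unfolding below_def by (intro filter_cong) (auto simp: not_less order.order_iff_strict)
    then have "length above + length below = length rest"
      unfolding above_def by (metis sum_length_filter_compl)
    moreover have "2 ^ (k + l) = 2 ^ (k' + l) + (2::nat) ^ (k + l')" using kl by simp
    ultimately have "2 ^ (k' + l) \<le> length above \<or> 2 ^ (k + l') \<le> length below"
      using less.prems(1) xs by auto
    then show ?thesis
    proof
      assume "2 ^ (k' + l) \<le> length above"
      then obtain ys where ys: "subseq ys above"
        and "length ys = k' \<and> sorted_wrt (<) ys \<or> length ys = l \<and> sorted_wrt (>) ys"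
        using less.hyps[of k' l above] kl x_rest by (auto simp: above_def)
      note ext = subseq_of_subseq_filter[OF ys[unfolded above_def]]
      from \<open>length ys = k' \<and> _ \<or> _\<close> ext xs kl show ?thesis
        by (elim disjE) (force intro!: exI[of _ "x # ys"], force intro!: exI[of _ ys])
    next
      assume "2 ^ (k + l') \<le> length below"
      then obtain ys where ys: "subseq ys below"
        and "length ys = k \<and> sorted_wrt (<) ys \<or> length ys = l' \<and> sorted_wrt (>) ys"
        using less.hyps[of k l' below] kl x_rest by (auto simp: below_def)
      note ext = subseq_of_subseq_filter[OF ys[unfolded below_def]]
      from \<open>length ys = k \<and> _ \<or> _\<close> ext xs kl show ?thesis
        by (elim disjE) (force intro!: exI[of _ ys], force intro!: exI[of _ "x # ys"])
    qed
  qed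
qed

section \<open>Products of powers of level sizes\<close>

lemma base_gt_powr_of_power_gt:
  fixes x \<delta> c :: real and a n :: nat
  assumes "0 < x" "x \<le> 1" "0 < \<delta>" "0 < c" "c * n \<le> a" "\<delta> ^ n < x ^ a"
  shows "\<delta> powr (1 / c) < x"
proof -
  have "\<delta> ^ n < x powr a" using assms(1,6) by (simp add: powr_realpow)
  also have "\<dots> \<le> x powr (c * n)" using assms(1,2,5) by (intro powr_mono') auto
  also have "\<dots> = (x powr c) ^ n" using assms(1) by (simp add: powr_powr[symmetric] powr_realpow)
  finally have "\<delta> < x powr c" by (rule power_less_imp_less_base) simp
  then have "\<delta> powr (1 / c) < (x powr c) powr (1 / c)"
    using assms(3,4) by (intro powr_less_mono2) auto
  also have "\<dots> = x" using assms(1,4) by (simp add: powr_powr)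
  finally show ?thesis .
qed

lemma level_lower_bound_step:
  fixes \<delta> c :: real and a :: "nat \<Rightarrow> nat"
  assumes "0 < \<delta>" "0 < c" "0 < n" "a 0 = 1" "(\<Sum>j=1..h. a j) = n"
    and big: "\<delta> ^ n < (\<Prod>j=1..h. (a (j - 1) / n) ^ a j)"
    and "j \<in> {1..h}" "c * n \<le> a j"
  shows "\<delta> powr (1 / c) * n < a (j - 1)"
proof -
  define x where "x i = real (a (i - 1)) / n" for i
  have x_01: "0 \<le> x i \<and> x i \<le> 1" if "i \<in> {1..h}" for i
  proof -
    have "a (i - 1) \<le> n"
    proof (cases "i = 1")
      case True
      then show ?thesis using assms(3,4) by simp
    next
      case False
      then have "i - 1 \<in> {1..h}" using that by auto
      then show ?thesis using assms(5) member_le_sum[of "i - 1" "{1..h}" a] by simp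
    qed
    then show ?thesis using assms(3) by (simp add: x_def)
  qed
  have "\<delta> ^ n < x j ^ a j"
    using big prod_le_factor[of "{1..h}" j "\<lambda>i. x i ^ a i"] x_01 assms(7)
    by (simp add: x_def power_le_one)
  moreover have "0 < a j"
    using assms(8) mult_pos_pos[OF assms(2)] assms(3) by (metis of_nat_0_less_iff order_less_le_trans)
  ultimately have "0 < x j"
    using x_01[OF assms(7)] assms(1) by (cases "x j = 0") (auto simp: power_0_left)
  then have "\<delta> powr (1 / c) < x j"
    using x_01[OF assms(7)] assms(1,2,8) \<open>\<delta> ^ n < x j ^ a j\<close>
    by (intro base_gt_powr_of_power_gt) auto
  then show ?thesis using assms(3) by (simp add: x_def field_simps)
qed

(* The lower bounds c_i n for the sizes of the levels i steps below a largest level. *)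
definition level_threshold :: "real \<Rightarrow> nat \<Rightarrow> nat \<Rightarrow> real" where
  "level_threshold \<delta> h i = ((\<lambda>y. \<delta> powr (1 / y)) ^^ i) (1 / h)"

lemma level_threshold_Suc: "level_threshold \<delta> h (Suc i) = \<delta> powr (1 / level_threshold \<delta> h i)"
  by (simp add: level_threshold_def)

lemma level_threshold_pos: "0 < h \<Longrightarrow> 0 < \<delta> \<Longrightarrow> 0 < level_threshold \<delta> h i"
  by (induction i) (auto simp: level_threshold_def)

lemma small_level_threshold_if_prod_power_gt:
  fixes \<delta> :: real and a :: "nat \<Rightarrow> nat"
  assumes "0 < h" "0 < \<delta>" "0 < n" "a 0 = 1" "(\<Sum>j=1..h. a j) = n"
    and "\<delta> ^ n < (\<Prod>j=1..h. (a (j - 1) / n) ^ a j)"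
  shows "\<exists>i\<le>h. level_threshold \<delta> h i * n \<le> 1"
proof -
  note step = level_lower_bound_step[OF assms(2) level_threshold_pos[OF assms(1,2)] assms(3-6)]
  have "Max (a ` {1..h}) \<in> a ` {1..h}" using assms(1) by (intro Max_in) auto
  then obtain j0 where j0: "j0 \<in> {1..h}" "a j0 = Max (a ` {1..h})" by (metis imageE)
  have "n \<le> h * a j0"
    using sum_bounded_above[of "{1..h}" a "a j0"] j0 assms(5) by simp
  have "level_threshold \<delta> h i * n \<le> a (j0 - i)" if "i \<le> j0" for i
    using that
  proof (induction i)
    case 0
    then show ?case
      using \<open>n \<le> h * a j0\<close> assms(1) by (simp add: level_threshold_def field_simps flip: of_nat_mult)
  next
    case (Suc i)
    then have "j0 - i \<in> {1..h}" using j0(1) by auto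
    then have "\<delta> powr (1 / level_threshold \<delta> h i) * n < a (j0 - i - 1)"
      by (rule step) (use Suc in auto)
    moreover have "j0 - i - 1 = j0 - Suc i" by simp
    ultimately show ?case unfolding level_threshold_Suc by simp
  qed
  from this[of j0] show ?thesis using j0(1) assms(4) by auto
qed

lemma eventually_prod_power_le:
  fixes h :: nat and \<delta> :: real
  assumes "0 < h" "0 < \<delta>"
  shows "\<forall>\<^sub>F n in sequentially. \<forall>a. a 0 = 1 \<and> (\<Sum>j=1..h. a j) = n \<longrightarrow>
           (\<Prod>j=1..h. real (a (j - 1)) ^ a j) \<le> (\<delta> * n) ^ n"
proof -
  define m where "m = Min (level_threshold \<delta> h ` {..h})"
  have "0 < m" using level_threshold_pos[OF assms] by (simp add: m_def)
  have m_le: "i \<le> h \<Longrightarrow> m \<le> level_threshold \<delta> h i" for i by (simp add: m_def)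
  obtain N :: nat where N: "1 / m < N" using reals_Archimedean2 by blast
  show ?thesis
  proof (rule eventually_sequentiallyI[of N], intro allI impI, elim conjE)
    fix n and a :: "nat \<Rightarrow> nat"
    assume "N \<le> n" and a0: "a 0 = 1" and a_sum: "(\<Sum>j=1..h. a j) = n"
    have "1 < m * N" using N \<open>0 < m\<close> by (simp add: field_simps)
    also have "\<dots> \<le> m * n" using \<open>N \<le> n\<close> \<open>0 < m\<close> by simp
    finally have "1 < m * n" .
    then have "0 < n" by (cases n) simp_all
    show "(\<Prod>j=1..h. real (a (j - 1)) ^ a j) \<le> (\<delta> * n) ^ n"
    proof (rule ccontr)
      assume "\<not> ?thesis"
      then have "\<delta> ^ n < (\<Prod>j=1..h. (a (j - 1) / n) ^ a j)"
        using prod_power_eq_normalised[OF a_sum \<open>0 < n\<close>] \<open>0 < n\<close>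
        by (simp add: power_mult_distrib mult.commute)
      then obtain i where "i \<le> h" "level_threshold \<delta> h i * n \<le> 1"
        using small_level_threshold_if_prod_power_gt[OF assms \<open>0 < n\<close> a0 a_sum] by blast
      moreover have "m * n \<le> level_threshold \<delta> h i * n"
        using m_le[OF \<open>i \<le> h\<close>] by (simp add: mult_right_mono)
      ultimately show False using \<open>1 < m * n\<close> by simp
    qed
  qed
qed

lemma funpow_fixpoint: "f x = x \<Longrightarrow> (f ^^ i) x = x"
  by (induction i) auto

lemma is_forest_parent_zero: "is_forest n par \<Longrightarrow> par 0 = 0"
  by (simp add: is_forest_def)

lemma is_forest_parent_le: "is_forest n par \<Longrightarrow> v \<le> n \<Longrightarrow> par v \<le> n"
  by (cases "v = 0") (auto simp: is_forest_def)

lemma is_forest_funpow_le: "is_forest n par \<Longrightarrow> v \<le> n \<Longrightarrow> (par ^^ i) v \<le> n"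
  by (induction i) (auto intro: is_forest_parent_le)

lemma is_forest_reaches_zero: "is_forest n par \<Longrightarrow> \<exists>m. (par ^^ m) v = 0"
  by (cases "v \<in> {1..n}") (auto simp: is_forest_def intro: exI[of _ 1])

(* The number of vertices on the path from v to its root; the virtual root 0 has depth 0. *)
definition depth :: "(nat \<Rightarrow> nat) \<Rightarrow> nat \<Rightarrow> nat" where
  "depth par v = (LEAST m. (par ^^ m) v = 0)"

lemma depth_zero [simp]: "depth par 0 = 0"
  by (simp add: depth_def)

lemma funpow_depth: "is_forest n par \<Longrightarrow> (par ^^ depth par v) v = 0"
  unfolding depth_def by (rule LeastI_ex) (rule is_forest_reaches_zero)

lemma funpow_neq_zero_below_depth: "i < depth par v \<Longrightarrow> (par ^^ i) v \<noteq> 0"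
  unfolding depth_def by (rule not_less_Least)

lemma funpow_eq_zero_from_depth:
  assumes "is_forest n par" "depth par v \<le> i"
  shows "(par ^^ i) v = 0"
proof -
  have "(par ^^ i) v = (par ^^ (i - depth par v)) ((par ^^ depth par v) v)"
    using assms(2) by (metis comp_apply funpow_add le_add_diff_inverse2)
  then show ?thesis
    using funpow_depth[OF assms(1)] funpow_fixpoint is_forest_parent_zero[OF assms(1)] by simp
qed

lemma depth_Suc:
  assumes "is_forest n par" "v \<noteq> 0"
  shows "depth par v = Suc (depth par (par v))"
  unfolding depth_def
  using Least_Suc[of "\<lambda>m. (par ^^ m) v = 0"] funpow_depth[OF assms(1), of v] assms(2)
  by (simp add: depth_def funpow_Suc_right del: funpow.simps)

lemma strict_anc_irrefl: "is_forest n par \<Longrightarrow> \<not> strict_anc par u u"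
proof
  assume "is_forest n par" "strict_anc par u u"
  then obtain m where "1 \<le> m" "(par ^^ m) u = u" "u \<noteq> 0" by (auto simp: strict_anc_def)
  then have "(par ^^ (m * depth par u)) u = u" by (metis funpow_mult funpow_fixpoint)
  moreover have "depth par u \<le> m * depth par u" using \<open>1 \<le> m\<close> by simp
  ultimately show False
    using funpow_eq_zero_from_depth[OF \<open>is_forest n par\<close>] \<open>u \<noteq> 0\<close> by metis
qed

lemma sorted_wrt_strict_anc_iterates:
  assumes "R \<le> depth par v"
  shows "sorted_wrt (strict_anc par) (rev (map (\<lambda>i. (par ^^ i) v) [0..<R]))"
proof -
  have "strict_anc par ((par ^^ j) v) ((par ^^ i) v)" if "i < j" "j < R" for i j
  proof -
    have "(par ^^ (j - i)) ((par ^^ i) v) = (par ^^ j) v"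
      using that(1) by (metis comp_apply funpow_add le_add_diff_inverse2 less_imp_le)
    moreover have "(par ^^ j) v \<noteq> 0"
      using that(2) assms by (intro funpow_neq_zero_below_depth) simp
    ultimately show ?thesis using that(1) unfolding strict_anc_def
      by (intro conjI exI[of _ "j - i"]) auto
  qed
  then show ?thesis
    by (auto simp: sorted_wrt_rev sorted_wrt_map intro: sorted_wrt_mono_rel[OF _ sorted_wrt_upt])
qed

lemma sorted_wrt_less_nth_less_iff:
  fixes xs :: "'a::linorder list"
  shows "sorted_wrt (<) xs \<Longrightarrow> i < length xs \<Longrightarrow> j < length xs \<Longrightarrow> xs ! i < xs ! j \<longleftrightarrow> i < j"
  using sorted_wrt_nth_less[of "(<)" xs i j] sorted_wrt_nth_less[of "(<)" xs j i]
  by (cases i j rule: linorder_cases) auto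

lemma sorted_wrt_greater_nth_less_iff:
  fixes xs :: "'a::linorder list"
  shows "sorted_wrt (>) xs \<Longrightarrow> i < length xs \<Longrightarrow> j < length xs \<Longrightarrow> xs ! i < xs ! j \<longleftrightarrow> j < i"
  using sorted_wrt_nth_less[of "(>)" xs i j] sorted_wrt_nth_less[of "(>)" xs j i]
  by (cases i j rule: linorder_cases) auto

lemma sorted_wrt_transfer_order_iso:
  fixes xs ys :: "'a::linorder list"
  assumes "length xs = length ys" "\<forall>i<length xs. \<forall>j<length xs. xs ! i < xs ! j \<longleftrightarrow> ys ! i < ys ! j"
  shows "sorted_wrt (<) ys \<Longrightarrow> sorted_wrt (<) xs" and "sorted_wrt (>) ys \<Longrightarrow> sorted_wrt (>) xs"
  using assms by (auto simp: sorted_wrt_iff_nth_less)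

lemma is_pattern_sorted_eq:
  assumes "is_pattern p" "sorted_wrt (<) p"
  shows "p = [1..<length p + 1]"
proof (rule sorted_distinct_set_unique)
  show "sorted p" "distinct p" using assms(2) by (simp_all add: strict_sorted_iff)
  show "set p = set [1..<length p + 1]"
    using assms(1) by (simp add: is_pattern_def atLeastLessThanSuc_atLeastAtMost del: upt_Suc)
qed (simp_all del: upt_Suc)

lemma is_pattern_rev_sorted_eq:
  assumes "is_pattern p" "sorted_wrt (>) p"
  shows "p = rev [1..<length p + 1]"
proof -
  have "is_pattern (rev p)" "sorted_wrt (<) (rev p)"
    using assms by (auto simp: is_pattern_def sorted_wrt_rev)
  then have "rev p = [1..<length p + 1]" using is_pattern_sorted_eq by fastforce
  then show ?thesis by (simp add: rev_swap)
qed

lemma is_instance_of_chain: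
  assumes "sorted_wrt (strict_anc par) vs" "set vs \<subseteq> {1..n}" "length p = length vs"
    and "\<forall>i<length p. \<forall>j<length p. p ! i < p ! j \<longleftrightarrow> vs ! i < vs ! j"
  shows "is_instance n par p vs"
  using assms unfolding is_instance_def by (auto intro: sorted_wrt_nth_less[OF assms(1)])

lemma is_instance_sorted_wrt:
  assumes "is_instance n par p vs" "transp R" "\<And>u w. strict_anc par u w \<Longrightarrow> R u w"
  shows "sorted_wrt R vs"
  unfolding sorted_wrt_iff_nth_Suc_transp[OF assms(2)]
  using assms(1,3) by (auto simp: is_instance_def)

lemma strict_anc_imp_parent_rel:
  assumes "transp R" "par 0 = 0" "\<And>v. par v \<noteq> 0 \<Longrightarrow> R (par v) v" "strict_anc par u w"
  shows "R u w"
proof -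
  have "(par ^^ Suc m) w \<noteq> 0 \<Longrightarrow> R ((par ^^ Suc m) w) w" for m
  proof (induction m)
    case 0
    then show ?case using assms(3) by simp
  next
    case (Suc m)
    then have "(par ^^ Suc m) w \<noteq> 0" using assms(2) by (cases "(par ^^ Suc m) w = 0") auto
    moreover have "R (par ((par ^^ Suc m) w)) ((par ^^ Suc m) w)" using Suc.prems assms(3) by simp
    ultimately show ?case using Suc.IH transpD[OF assms(1)] by auto
  qed
  moreover obtain m where "(par ^^ Suc m) w = u" "u \<noteq> 0"
    using assms(4) by (auto simp: strict_anc_def Suc_le_eq dest!: gr0_implies_Suc)
  ultimately show ?thesis by blast
qed

section \<open>Forests with monotone labels\<close>

lemma is_forest_of_measure:
  fixes \<mu> :: "nat \<Rightarrow> nat"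
  assumes "\<forall>v. v \<notin> {1..n} \<longrightarrow> par v = 0" "\<forall>v\<in>{1..n}. par v \<le> n"
    and "\<And>v. v \<in> {1..n} \<Longrightarrow> par v \<noteq> 0 \<Longrightarrow> \<mu> (par v) < \<mu> v"
  shows "is_forest n par"
proof -
  have "\<exists>m. (par ^^ m) v = 0" if "v \<in> {1..n}" for v
    using that
  proof (induction v rule: measure_induct_rule[of \<mu>])
    case (less v)
    show ?case
    proof (cases "par v = 0")
      case True
      then show ?thesis by (intro exI[of _ 1]) simp
    next
      case False
      then have "par v \<in> {1..n}" using assms(2) less.prems by auto
      then obtain m where "(par ^^ m) (par v) = 0"
        using less.IH assms(3) less.prems False by blast
      then show ?thesis by (intro exI[of _ "Suc m"]) (simp add: funpow_Suc_right del: funpow.simps)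
    qed
  qed
  then show ?thesis using assms(1,2) by (simp add: is_forest_def)
qed

lemma finite_forests: "finite {par. is_forest n par}"
proof (rule finite_subset)
  show "{par. is_forest n par} \<subseteq> Pi_zero {1..n} (\<lambda>_. {..n})"
    by (auto simp: is_forest_def Pi_zero_def)
qed (simp add: finite_Pi_zero)

lemma card_le_num_avoiding:
  "F \<subseteq> {par. is_forest n par \<and> avoids n par S} \<Longrightarrow> card F \<le> num_avoiding S n"
  unfolding num_avoiding_def by (rule card_mono) (auto intro: finite_subset[OF _ finite_forests])

lemma fact_le_num_avoiding_if_no_increasing:
  assumes "\<forall>p\<in>S. is_pattern p" "\<not> (\<exists>k>0. [1..<k+1] \<in> S)"
  shows "fact n \<le> num_avoiding S n"
proof -
  let ?F = "Pi_zero {1..n} (\<lambda>v. {..<v})"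
  have "?F \<subseteq> {par. is_forest n par \<and> avoids n par S}"
  proof (intro subsetI CollectI conjI)
    fix par assume F: "par \<in> ?F"
    then have parent_less: "par v \<noteq> 0 \<Longrightarrow> par v < v" for v
      by (cases "v \<in> {1..n}") (auto simp: Pi_zero_def)
    show "is_forest n par"
      using F parent_less by (intro is_forest_of_measure[where \<mu> = id]) (auto simp: Pi_zero_def)
    have "par 0 = 0" using parent_less by blast
    show "avoids n par S" unfolding avoids_def
    proof (intro ballI notI, elim exE)
      fix p vs assume "p \<in> S" and inst: "is_instance n par p vs"
      have anc: "u < w" if "strict_anc par u w" for u w
        using strict_anc_imp_parent_rel[where R = "(<)", OF _ \<open>par 0 = 0\<close> parent_less that] by simp
      have "sorted_wrt (<) vs" by (rule is_instance_sorted_wrt[OF inst _ anc]) simp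
      then have "sorted_wrt (<) p"
        using inst sorted_wrt_transfer_order_iso(1)[of p vs] by (simp add: is_instance_def)
      then have "p = [1..<length p + 1]" using is_pattern_sorted_eq assms(1) \<open>p \<in> S\<close> by blast
      moreover have "0 < length p" using assms(1) \<open>p \<in> S\<close> by (auto simp: is_pattern_def)
      ultimately show False using assms(2) \<open>p \<in> S\<close> by metis
    qed
  qed
  then have "card ?F \<le> num_avoiding S n" by (rule card_le_num_avoiding)
  moreover have "card ?F = fact n" by (simp add: card_Pi_zero fact_prod)
  ultimately show ?thesis by simp
qed

lemma fact_le_num_avoiding_if_no_decreasing:
  assumes "\<forall>p\<in>S. is_pattern p" "\<not> (\<exists>l>0. rev [1..<l+1] \<in> S)"
  shows "fact n \<le> num_avoiding S n"
proof -
  let ?F = "Pi_zero {1..n} (\<lambda>v. insert 0 {v<..n})"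
  have "?F \<subseteq> {par. is_forest n par \<and> avoids n par S}"
  proof (intro subsetI CollectI conjI)
    fix par assume F: "par \<in> ?F"
    then have parent_greater: "par v \<noteq> 0 \<Longrightarrow> v < par v" for v
      by (cases "v \<in> {1..n}") (force simp: Pi_zero_def)+
    have parent_le: "par v \<le> n" for v
      using F by (cases "v \<in> {1..n}") (force simp: Pi_zero_def)+
    show "is_forest n par"
    proof (rule is_forest_of_measure[where \<mu> = "\<lambda>v. n - v"])
      show "\<forall>v. v \<notin> {1..n} \<longrightarrow> par v = 0" using F by (simp add: Pi_zero_def)
      show "\<forall>v\<in>{1..n}. par v \<le> n" using parent_le by blast
      show "n - par v < n - v" if "v \<in> {1..n}" "par v \<noteq> 0" for v
        using parent_greater[OF that(2)] parent_le[of v] by linarith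
    qed
    have "par 0 = 0" using F by (simp add: Pi_zero_def)
    show "avoids n par S" unfolding avoids_def
    proof (intro ballI notI, elim exE)
      fix p vs assume "p \<in> S" and inst: "is_instance n par p vs"
      have anc: "w < u" if "strict_anc par u w" for u w
        using strict_anc_imp_parent_rel[where R = "(>)", OF _ \<open>par 0 = 0\<close> parent_greater that] by simp
      have "sorted_wrt (>) vs" by (rule is_instance_sorted_wrt[OF inst _ anc]) simp
      then have "sorted_wrt (>) p"
        using inst sorted_wrt_transfer_order_iso(2)[of p vs] by (simp add: is_instance_def)
      then have "p = rev [1..<length p + 1]" using is_pattern_rev_sorted_eq assms(1) \<open>p \<in> S\<close> by blast
      moreover have "0 < length p" using assms(1) \<open>p \<in> S\<close> by (auto simp: is_pattern_def)
      ultimately show False using assms(2) \<open>p \<in> S\<close> by metis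
    qed
  qed
  then have "card ?F \<le> num_avoiding S n" by (rule card_le_num_avoiding)
  moreover have "card ?F = (\<Prod>v=1..n. n + 1 - v)"
    unfolding card_Pi_zero[OF finite_atLeastAtMost] by (intro prod.cong refl) auto
  moreover have "\<dots> = fact n"
    using prod.atLeastAtMost_rev[of "\<lambda>i. i" 1 n] by (simp add: fact_prod)
  ultimately show ?thesis by simp
qed

section \<open>Forests of bounded depth\<close>

lemma depth_lt_if_avoids:
  assumes forest: "is_forest n par" and "avoids n par S" "[1..<k+1] \<in> S" "rev [1..<l+1] \<in> S"
    and "v \<in> {1..n}"
  shows "depth par v < 2 ^ (k + l)"
proof (rule ccontr)
  assume deep: "\<not> ?thesis"
  define cs where "cs = rev (map (\<lambda>i. (par ^^ i) v) [0..<2 ^ (k + l)])"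
  have chain: "sorted_wrt (strict_anc par) cs"
    using deep sorted_wrt_strict_anc_iterates by (simp add: cs_def)
  have cs_vertices: "set cs \<subseteq> {1..n}"
  proof
    fix u assume "u \<in> set cs"
    then obtain i where "i < 2 ^ (k + l)" "u = (par ^^ i) v" by (auto simp: cs_def)
    moreover have "(par ^^ i) v \<noteq> 0"
      using calculation(1) deep by (intro funpow_neq_zero_below_depth) simp
    moreover have "(par ^^ i) v \<le> n"
      using \<open>v \<in> {1..n}\<close> by (intro is_forest_funpow_le[OF forest]) simp
    ultimately show "u \<in> {1..n}" by simp
  qed
  have "distinct cs"
    using chain strict_anc_irrefl[OF forest] by (rule distinct_if_sorted_wrt_irrefl)
  then obtain ys where "subseq ys cs"
    and ys: "length ys = k \<and> sorted_wrt (<) ys \<or> length ys = l \<and> sorted_wrt (>) ys"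
    using erdos_szekeres[of k l cs] by (auto simp: cs_def)
  then have "sorted_wrt (strict_anc par) ys" "set ys \<subseteq> {1..n}"
    using chain cs_vertices sorted_wrt_subseq set_subseq_subset by blast+
  from ys show False
  proof
    assume "length ys = k \<and> sorted_wrt (<) ys"
    then have "is_instance n par [1..<k+1] ys"
      using \<open>sorted_wrt (strict_anc par) ys\<close> \<open>set ys \<subseteq> {1..n}\<close>
      by (intro is_instance_of_chain) (simp_all add: sorted_wrt_less_nth_less_iff del: upt_Suc)
    then show False using assms(2,3) by (auto simp: avoids_def)
  next
    assume "length ys = l \<and> sorted_wrt (>) ys"
    moreover have "sorted_wrt (>) (rev [1..<l+1])" by (simp add: sorted_wrt_rev del: upt_Suc)
    ultimately have "is_instance n par (rev [1..<l+1]) ys"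
      using \<open>sorted_wrt (strict_anc par) ys\<close> \<open>set ys \<subseteq> {1..n}\<close>
      by (intro is_instance_of_chain) (simp_all add: sorted_wrt_greater_nth_less_iff del: upt_Suc)
    then show False using assms(2,4) by (auto simp: avoids_def)
  qed
qed

definition level :: "nat \<Rightarrow> (nat \<Rightarrow> nat) \<Rightarrow> nat \<Rightarrow> nat set" where
  "level n lam j = {u. u \<le> n \<and> lam u = j}"

lemma Pi_zero_positive_iff:
  fixes h :: nat
  assumes "lam \<in> Pi_zero A (\<lambda>_. {1..h})"
  shows "lam u = 0 \<longleftrightarrow> u \<notin> A" "0 < lam u \<longleftrightarrow> u \<in> A"
  using assms by (cases "u \<in> A"; auto simp: Pi_zero_def)+

lemma level_zero: "lam \<in> Pi_zero {1..n} (\<lambda>_. {1..h}) \<Longrightarrow> level n lam 0 = {0}"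
  by (auto simp: level_def Pi_zero_positive_iff)

lemma level_pos:
  "0 < j \<Longrightarrow> lam \<in> Pi_zero {1..n} (\<lambda>_. {1..h}) \<Longrightarrow> level n lam j = {u\<in>{1..n}. lam u = j}"
  by (auto simp: level_def Pi_zero_positive_iff)

lemma sum_card_levels:
  assumes "lam \<in> Pi_zero {1..n} (\<lambda>_. {1..h})"
  shows "(\<Sum>j=1..h. card (level n lam j)) = n"
proof -
  have "(\<Sum>j=1..h. card (level n lam j)) = (\<Sum>j=1..h. card {u\<in>{1..n}. lam u = j})"
    using assms by (intro sum.cong refl) (simp add: level_pos)
  also have "\<dots> = n" using assms by (subst sum_card_fibres) (auto simp: Pi_zero_def)
  finally show ?thesis .
qed

lemma card_parents_between_levels:
  assumes "lam \<in> Pi_zero {1..n} (\<lambda>_. {1..h})"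
  shows "card (Pi_zero {1..n} (\<lambda>v. level n lam (lam v - 1)))
           = (\<Prod>j=1..h. card (level n lam (j - 1)) ^ card (level n lam j))"
proof -
  have "card (Pi_zero {1..n} (\<lambda>v. level n lam (lam v - 1))) = (\<Prod>v=1..n. card (level n lam (lam v - 1)))"
    by (simp add: card_Pi_zero)
  also have "\<dots> = (\<Prod>j=1..h. card (level n lam (j - 1)) ^ card {u\<in>{1..n}. lam u = j})"
    using assms by (intro prod_eq_prod_power_card_fibres) (auto simp: Pi_zero_def)
  also have "\<dots> = (\<Prod>j=1..h. card (level n lam (j - 1)) ^ card (level n lam j))"
    using assms by (intro prod.cong refl) (simp add: level_pos)
  finally show ?thesis .
qed

definition bounded_depth_forests :: "nat \<Rightarrow> nat \<Rightarrow> (nat \<Rightarrow> nat) set" where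
  "bounded_depth_forests h n = {par. is_forest n par \<and> (\<forall>v\<in>{1..n}. depth par v \<le> h)}"

lemma bounded_depth_forests_subset:
  "bounded_depth_forests h n
     \<subseteq> (\<Union>lam\<in>Pi_zero {1..n} (\<lambda>_. {1..h}). Pi_zero {1..n} (\<lambda>v. level n lam (lam v - 1)))"
proof (intro subsetI)
  fix par assume "par \<in> bounded_depth_forests h n"
  then have forest: "is_forest n par" and shallow: "\<forall>v\<in>{1..n}. depth par v \<le> h"
    by (auto simp: bounded_depth_forests_def)
  define lam where "lam u = (if u \<in> {1..n} then depth par u else 0)" for u
  have lam_depth: "lam u = depth par u" if "u \<le> n" for u
    using that by (cases "u = 0") (simp_all add: lam_def)
  have depth_parent: "depth par (par v) = depth par v - 1" if "v \<in> {1..n}" for v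
    using depth_Suc[OF forest, of v] that by simp
  have "lam \<in> Pi_zero {1..n} (\<lambda>_. {1..h})"
    using shallow depth_Suc[OF forest] by (auto simp: Pi_zero_def lam_def)
  moreover have "par \<in> Pi_zero {1..n} (\<lambda>v. level n lam (lam v - 1))"
    using forest depth_parent lam_depth is_forest_parent_le[OF forest]
    by (auto simp: Pi_zero_def level_def is_forest_def)
  ultimately show "par \<in> (\<Union>lam\<in>Pi_zero {1..n} (\<lambda>_. {1..h}). Pi_zero {1..n} (\<lambda>v. level n lam (lam v - 1)))"
    by blast
qed

lemma card_bounded_depth_forests_le:
  "card (bounded_depth_forests h n)
     \<le> (\<Sum>lam\<in>Pi_zero {1..n} (\<lambda>_. {1..h}). \<Prod>j=1..h. card (level n lam (j - 1)) ^ card (level n lam j))"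
proof -
  have finite_levels: "finite (Pi_zero {1..n} (\<lambda>v. level n lam (lam v - 1)))" for lam
    by (auto simp: level_def intro: finite_Pi_zero)
  have "card (bounded_depth_forests h n)
          \<le> card (\<Union>lam\<in>Pi_zero {1..n} (\<lambda>_. {1..h}). Pi_zero {1..n} (\<lambda>v. level n lam (lam v - 1)))"
    using bounded_depth_forests_subset finite_levels by (intro card_mono) (auto simp: finite_Pi_zero)
  also have "\<dots> \<le> (\<Sum>lam\<in>Pi_zero {1..n} (\<lambda>_. {1..h}). card (Pi_zero {1..n} (\<lambda>v. level n lam (lam v - 1))))"
    by (rule card_UN_le) (simp add: finite_Pi_zero)
  also have "\<dots> = (\<Sum>lam\<in>Pi_zero {1..n} (\<lambda>_. {1..h}).
                     \<Prod>j=1..h. card (level n lam (j - 1)) ^ card (level n lam j))"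
    by (intro sum.cong refl card_parents_between_levels)
  finally show ?thesis .
qed

lemma eventually_card_bounded_depth_forests_le:
  fixes h :: nat and \<epsilon> :: real
  assumes "0 < h" "0 < \<epsilon>"
  shows "\<forall>\<^sub>F n in sequentially. real (card (bounded_depth_forests h n)) \<le> (\<epsilon> * n) ^ n"
proof -
  have "0 < \<epsilon> / h" using assms by simp
  from eventually_prod_power_le[OF assms(1) this] show ?thesis
  proof (rule eventually_mono)
    fix n
    assume prod_le: "\<forall>a. a 0 = 1 \<and> (\<Sum>j=1..h. a j) = n \<longrightarrow>
                       (\<Prod>j=1..h. real (a (j - 1)) ^ a j) \<le> (\<epsilon> / h * n) ^ n"
    let ?Lam = "Pi_zero {1..n} (\<lambda>_. {1..h})"
    have term_le: "(\<Prod>j=1..h. real (card (level n lam (j - 1))) ^ card (level n lam j))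
                     \<le> (\<epsilon> / h * n) ^ n" if "lam \<in> ?Lam" for lam
      by (rule prod_le[rule_format, of "\<lambda>j. card (level n lam j)"])
        (use level_zero[OF that] sum_card_levels[OF that] in simp)
    have "real (card (bounded_depth_forests h n))
            \<le> real (\<Sum>lam\<in>?Lam. \<Prod>j=1..h. card (level n lam (j - 1)) ^ card (level n lam j))"
      by (rule of_nat_mono) (rule card_bounded_depth_forests_le)
    also have "\<dots> = (\<Sum>lam\<in>?Lam. \<Prod>j=1..h. real (card (level n lam (j - 1))) ^ card (level n lam j))"
      by simp
    also have "\<dots> \<le> (\<Sum>lam\<in>?Lam. (\<epsilon> / h * n) ^ n)"
      by (rule sum_mono) (rule term_le)
    also have "\<dots> = real (card ?Lam) * (\<epsilon> / h * n) ^ n"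
      by simp
    also have "\<dots> = (real h * (\<epsilon> / h * n)) ^ n"
      using card_Pi_zero[of "{1..n}" "\<lambda>_. {1..h}"] by (simp only: power_mult_distrib) simp
    also have "real h * (\<epsilon> / h * n) = \<epsilon> * n"
      using assms(1) by simp
    finally show "real (card (bounded_depth_forests h n)) \<le> (\<epsilon> * n) ^ n" .
  qed
qed

lemma num_avoiding_le_card_bounded_depth_forests:
  assumes "[1..<k+1] \<in> S" "rev [1..<l+1] \<in> S"
  shows "num_avoiding S n \<le> card (bounded_depth_forests (2 ^ (k + l) - 1) n)"
  unfolding num_avoiding_def
proof (rule card_mono)
  show "finite (bounded_depth_forests (2 ^ (k + l) - 1) n)"
    unfolding bounded_depth_forests_def by (rule finite_subset[OF _ finite_forests]) auto
  have "depth par v \<le> 2 ^ (k + l) - 1" if "is_forest n par" "avoids n par S" "v \<in> {1..n}" for par v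
    using depth_lt_if_avoids[OF that(1,2) assms that(3)] by simp
  then show "{par. is_forest n par \<and> avoids n par S} \<subseteq> bounded_depth_forests (2 ^ (k + l) - 1) n"
    by (auto simp: bounded_depth_forests_def)
qed

theorem proposition5p9:
  fixes S :: "nat list set"
  assumes "\<forall>p\<in>S. is_pattern p"
  shows "((\<lambda>n. root n (real (num_avoiding S n)) / real n) \<longlonglongrightarrow> 0) \<longleftrightarrow>
         ((\<exists>k>0. [1..<k+1] \<in> S) \<and> (\<exists>l>0. rev [1..<l+1] \<in> S))"
proof
  assume lim: "(\<lambda>n. root n (real (num_avoiding S n)) / real n) \<longlonglongrightarrow> 0"
  show "(\<exists>k>0. [1..<k+1] \<in> S) \<and> (\<exists>l>0. rev [1..<l+1] \<in> S)"
  proof (rule ccontr)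
    assume "\<not> ?thesis"
    then have "fact n \<le> num_avoiding S n" for n
      using fact_le_num_avoiding_if_no_increasing fact_le_num_avoiding_if_no_decreasing assms
      by blast
    then show False using root_div_not_tendsto_zero lim by blast
  qed
next
  assume "(\<exists>k>0. [1..<k+1] \<in> S) \<and> (\<exists>l>0. rev [1..<l+1] \<in> S)"
  then obtain k l where "0 < k" and patterns: "[1..<k+1] \<in> S" "rev [1..<l+1] \<in> S" by blast
  have "0 < 2 ^ (k + l) - (1::nat)" using \<open>0 < k\<close> one_less_power[of "2::nat" "k + l"] by simp
  show "(\<lambda>n. root n (real (num_avoiding S n)) / real n) \<longlonglongrightarrow> 0"
  proof (rule root_div_tendsto_zero)
    fix \<epsilon> :: real
    assume "0 < \<epsilon>"
    from eventually_card_bounded_depth_forests_le[OF \<open>0 < 2 ^ (k + l) - 1\<close> this]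
    show "\<forall>\<^sub>F n in sequentially. real (num_avoiding S n) \<le> (\<epsilon> * n) ^ n"
      by (rule eventually_mono)
        (use num_avoiding_le_card_bounded_depth_forests[OF patterns] in \<open>meson of_nat_le_iff order_trans\<close>)
  qed
qed

end
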